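(* Let $G$ be a finite GVZ-group with $|\mathrm{cd}(G)|=2$, and let $\{X_1,\dots,X_n\}=\{Z(\psi):\psi\in\mathrm{nl}(G)\}$ be the collection of centres of non-linear irreducible characters of $G$. Let $\chi\in\mathrm{nl}(G)$ and $1\le i\le n$. Then $Z(\chi)=X_i$ if and only if $[X_i,G]\subseteq\ker\chi$.
   Context: All groups are finite. $\mathrm{Irr}(G)$ is the set of complex irreducible characters of $G$, $\mathrm{nl}(G)$ the set of non-linear irreducible characters, and $\mathrm{cd}(G)=\{\chi(1):\chi\in\mathrm{Irr}(G)\}$. For a character $\chi$, $Z(\chi)=\{g\in G: |\chi(g)|=\chi(1)\}$. A nonabelian group $G$ is a GVZ-group if for every $\chi\in\mathrm{Irr}(G)$ we have $\chi(g)=0$ for all $g\in G\setminus Z(\chi)$. *)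

theory Defs
  imports "HOL-Algebra.Generated_Groups" "Jordan_Normal_Form.Matrix"
begin

definition is_rep :: "('a, 'b) monoid_scheme \<Rightarrow> nat \<Rightarrow> ('a \<Rightarrow> complex mat) \<Rightarrow> bool" where
  "is_rep G n \<rho> \<longleftrightarrow> 0 < n \<and> (\<forall>g\<in>carrier G. \<rho> g \<in> carrier_mat n n)
     \<and> \<rho> \<one>\<^bsub>G\<^esub> = 1\<^sub>m n
     \<and> (\<forall>x\<in>carrier G. \<forall>y\<in>carrier G. \<rho> (x \<otimes>\<^bsub>G\<^esub> y) = \<rho> x * \<rho> y)"

definition nontriv_invariant_subspace ::
  "('a, 'b) monoid_scheme \<Rightarrow> nat \<Rightarrow> ('a \<Rightarrow> complex mat) \<Rightarrow> complex vec set \<Rightarrow> bool" where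
  "nontriv_invariant_subspace G n \<rho> W \<longleftrightarrow>
     W \<subseteq> carrier_vec n \<and> 0\<^sub>v n \<in> W
     \<and> (\<forall>v\<in>W. \<forall>w\<in>W. v + w \<in> W) \<and> (\<forall>c. \<forall>w\<in>W. c \<cdot>\<^sub>v w \<in> W)
     \<and> W \<noteq> {0\<^sub>v n} \<and> W \<noteq> carrier_vec n
     \<and> (\<forall>g\<in>carrier G. \<forall>w\<in>W. \<rho> g *\<^sub>v w \<in> W)"

definition irreducible_rep :: "('a, 'b) monoid_scheme \<Rightarrow> nat \<Rightarrow> ('a \<Rightarrow> complex mat) \<Rightarrow> bool" where
  "irreducible_rep G n \<rho> \<longleftrightarrow> is_rep G n \<rho> \<and> \<not> (\<exists>W. nontriv_invariant_subspace G n \<rho> W)"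

definition mat_trace :: "complex mat \<Rightarrow> complex" where
  "mat_trace A = (\<Sum>i<dim_row A. A $$ (i, i))"

definition Irr :: "('a, 'b) monoid_scheme \<Rightarrow> ('a \<Rightarrow> complex) set" where
  "Irr G = {\<chi>. \<exists>n \<rho>. irreducible_rep G n \<rho> \<and>
              \<chi> = (\<lambda>g. if g \<in> carrier G then mat_trace (\<rho> g) else 0)}"

definition nl :: "('a, 'b) monoid_scheme \<Rightarrow> ('a \<Rightarrow> complex) set" where
  "nl G = {\<chi> \<in> Irr G. \<chi> \<one>\<^bsub>G\<^esub> \<noteq> 1}"

definition cd :: "('a, 'b) monoid_scheme \<Rightarrow> complex set" where
  "cd G = (\<lambda>\<chi>. \<chi> \<one>\<^bsub>G\<^esub>) ` Irr G"

definition Zchar :: "('a, 'b) monoid_scheme \<Rightarrow> ('a \<Rightarrow> complex) \<Rightarrow> 'a set" where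
  "Zchar G \<chi> = {g \<in> carrier G. cmod (\<chi> g) = cmod (\<chi> \<one>\<^bsub>G\<^esub>)}"

definition kerchar :: "('a, 'b) monoid_scheme \<Rightarrow> ('a \<Rightarrow> complex) \<Rightarrow> 'a set" where
  "kerchar G \<chi> = {g \<in> carrier G. \<chi> g = \<chi> \<one>\<^bsub>G\<^esub>}"

definition commutator_sub :: "('a, 'b) monoid_scheme \<Rightarrow> 'a set \<Rightarrow> 'a set" where
  "commutator_sub G X = generate G
     {inv\<^bsub>G\<^esub> x \<otimes>\<^bsub>G\<^esub> inv\<^bsub>G\<^esub> g \<otimes>\<^bsub>G\<^esub> x \<otimes>\<^bsub>G\<^esub> g | x g. x \<in> X \<and> g \<in> carrier G}"

definition GVZ :: "('a, 'b) monoid_scheme \<Rightarrow> bool" where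
  "GVZ G \<longleftrightarrow> (\<exists>x\<in>carrier G. \<exists>y\<in>carrier G. x \<otimes>\<^bsub>G\<^esub> y \<noteq> y \<otimes>\<^bsub>G\<^esub> x)
     \<and> (\<forall>\<chi>\<in>Irr G. \<forall>g\<in>carrier G - Zchar G \<chi>. \<chi> g = 0)"

end

theory Submission
  imports Defs "HOL-Algebra.Multiplicative_Group" "Jordan_Normal_Form.Spectral_Radius"
begin

(* Let chi be afforded by an irreducible representation rho of degree n. Each rho(g) has finite
   order, hence is diagonalisable with roots of unity on the diagonal, so |chi(g)| = n exactly when
   rho(g) is scalar and chi(g) = n exactly when rho(g) = 1. Consequently the commutator [x,g] lies
   in ker chi iff rho(x) commutes with rho(g), and by Schur's lemma [X,G] <= ker chi iff X <= Z(chi).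
   In a GVZ-group chi vanishes off Z(chi), so the first orthogonality relation gives
   |G| = chi(1)^2 |Z(chi)|. If |cd(G)| = 2, all non-linear characters have the same degree, hence
   every X_i has the same order as Z(chi), and X_i <= Z(chi) already forces X_i = Z(chi). *)

section \<open>Traces and matrices of finite order\<close>

lemma mat_trace_mult_comm:
  assumes "A \<in> carrier_mat n m" "B \<in> carrier_mat m n"
  shows "mat_trace (A * B) = mat_trace (B * A)"
proof -
  have "mat_trace (A * B) = (\<Sum>i<n. \<Sum>k<m. A $$ (i,k) * B $$ (k,i))"
    using assms by (simp add: mat_trace_def scalar_prod_def atLeast0LessThan)
  also have "\<dots> = (\<Sum>k<m. \<Sum>i<n. B $$ (k,i) * A $$ (i,k))"
    by (subst sum.swap) (simp add: mult.commute)
  also have "\<dots> = mat_trace (B * A)"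
    using assms by (simp add: mat_trace_def scalar_prod_def atLeast0LessThan)
  finally show ?thesis .
qed

lemma mat_trace_smult:
  assumes "A \<in> carrier_mat n n"
  shows "mat_trace (c \<cdot>\<^sub>m A) = c * mat_trace A"
  using assms unfolding mat_trace_def sum_distrib_left by (intro sum.cong) auto

lemma mat_trace_one [simp]: "mat_trace (1\<^sub>m n) = of_nat n"
  by (simp add: mat_trace_def)

lemma mat_trace_smult_one [simp]: "mat_trace (c \<cdot>\<^sub>m 1\<^sub>m n) = of_nat n * c"
  by (simp add: mat_trace_def)

lemma smult_one_mat_pow: "(c \<cdot>\<^sub>m 1\<^sub>m n) ^\<^sub>m k = (c ^ k :: 'a :: comm_ring_1) \<cdot>\<^sub>m 1\<^sub>m n"
proof (induction k)
  case (Suc k)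
  then show ?case by (simp, intro eq_matI) auto
qed (simp, intro eq_matI, auto)

lemma smult_one_mat_comm:
  fixes c :: "'a :: comm_ring_1"
  assumes "B \<in> carrier_mat n n"
  shows "(c \<cdot>\<^sub>m 1\<^sub>m n) * B = B * (c \<cdot>\<^sub>m 1\<^sub>m n)"
proof -
  have "(c \<cdot>\<^sub>m 1\<^sub>m n) * B = c \<cdot>\<^sub>m B"
    using mult_smult_assoc_mat[OF one_carrier_mat assms] assms by simp
  also have "\<dots> = B * (c \<cdot>\<^sub>m 1\<^sub>m n)"
    using mult_smult_distrib[OF assms one_carrier_mat] assms by simp
  finally show ?thesis .
qed

lemma mult_mat_entry:
  assumes "A \<in> carrier_mat n n" "B \<in> carrier_mat n n" "i < n" "j < n"
  shows "(A * B) $$ (i,j) = (\<Sum>p<n. A $$ (i,p) * B $$ (p,j))"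
  using assms by (simp add: scalar_prod_def lessThan_atLeast0)

lemma jordan_matrix_Cons:
  "jordan_matrix ((k, a) # n_as) = four_block_mat (jordan_block k a)
     (0\<^sub>m k (sum_list (map fst n_as))) (0\<^sub>m (sum_list (map fst n_as)) k) (jordan_matrix n_as)"
proof -
  have "jordan_matrix ((k, a) # n_as) = four_block_mat (jordan_block k a)
     (0\<^sub>m k (dim_col (jordan_matrix n_as))) (0\<^sub>m (dim_row (jordan_matrix n_as)) k) (jordan_matrix n_as)"
    by (simp add: jordan_matrix_def Let_def)
  then show ?thesis by simp
qed

lemma jordan_matrix_pow_eq_oneD:
  assumes "0 \<notin> fst ` set n_as" "0 < m"
    and "jordan_matrix n_as ^\<^sub>m m = 1\<^sub>m (sum_list (map fst n_as))"
  shows "\<forall>(k, a) \<in> set n_as. k = 1 \<and> (a :: 'a :: field_char_0) ^ m = 1"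
  using assms
proof (induction n_as)
  case (Cons ka n_as)
  obtain k a where ka: "ka = (k, a)" by force
  define N where "N = sum_list (map fst n_as)"
  define B where "B = jordan_block k a ^\<^sub>m m"
  define C where "C = jordan_matrix n_as ^\<^sub>m m"
  have "jordan_matrix (ka # n_as) ^\<^sub>m m = diag_block_mat (B # map (\<lambda>(k, a). jordan_block k a ^\<^sub>m m) n_as)"
    by (simp add: jordan_matrix_pow ka B_def)
  also have "\<dots> = four_block_mat B (0\<^sub>m k N) (0\<^sub>m N k) C"
    by (simp add: Let_def jordan_matrix_pow[of n_as m, symmetric] B_def C_def N_def)
  finally have one: "four_block_mat B (0\<^sub>m k N) (0\<^sub>m N k) C = 1\<^sub>m (k + N)"
    using Cons.prems(3) by (simp add: ka N_def)
  have dims: "B \<in> carrier_mat k k" "C \<in> carrier_mat N N"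
    by (simp_all add: B_def C_def N_def)
  have "C = 1\<^sub>m N"
  proof (rule eq_matI)
    fix i j assume "i < dim_row (1\<^sub>m N)" "j < dim_col (1\<^sub>m N)"
    then show "C $$ (i, j) = 1\<^sub>m N $$ (i, j)"
      using dims arg_cong[OF one, of "\<lambda>M. M $$ (k + i, k + j)"] by simp
  qed (use dims in auto)
  then have IH: "\<forall>(k, a) \<in> set n_as. k = 1 \<and> a ^ m = 1"
    using Cons.IH Cons.prems(1,2) by (simp add: C_def N_def)
  have k0: "0 < k" using Cons.prems(1) ka by auto
  have entry: "B $$ (i, j) = 1\<^sub>m (k + N) $$ (i, j)" if "i < k" "j < k" for i j
    using dims that arg_cong[OF one, of "\<lambda>M. M $$ (i, j)"] by simp
  have am: "a ^ m = 1" using entry[of 0 0] k0 by (simp add: B_def jordan_block_pow)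
  have "k = 1"
  proof (rule ccontr)
    assume "k \<noteq> 1"
    then have "1 < k" using k0 by simp
    then have "of_nat m * a ^ (m - 1) = 0" using entry[of 0 1] by (simp add: B_def jordan_block_pow)
    then have "a = 0" using Cons.prems(2) by simp
    then show False using am Cons.prems(2) by (simp add: power_0_left)
  qed
  then show ?case using IH am ka by simp
qed simp

lemma jordan_matrix_diagonal:
  assumes "\<forall>(k, a) \<in> set n_as. k = 1"
  shows "jordan_matrix n_as = mat (length n_as) (length n_as) (\<lambda>(i, j). if i = j then snd (n_as ! i) else 0)"
  using assms
proof (induction n_as)
  case Nil
  then show ?case by (auto simp: jordan_matrix_def)
next
  case (Cons ka n_as)
  obtain a where ka: "ka = (1, a)" using Cons.prems by auto
  have IH: "jordan_matrix n_as = mat (length n_as) (length n_as) (\<lambda>(i, j). if i = j then snd (n_as ! i) else 0)"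
    using Cons by auto
  then have "sum_list (map fst n_as) = length n_as"
    using jordan_matrix_dim(1)[of n_as] by simp
  then show ?case unfolding ka jordan_matrix_Cons IH
    by (intro eq_matI) (auto simp: nth_Cons split: nat.splits)
qed

lemma const_if_norm_sum_eq_card:
  fixes f :: "'i \<Rightarrow> complex"
  assumes I: "finite I" and unit: "\<forall>i\<in>I. cmod (f i) = 1" and sum: "cmod (sum f I) = card I"
  shows "\<exists>c. \<forall>i\<in>I. f i = c"
proof -
  define S where "S = sum f I"
  define L where "L = real (card I)"
  have norm_S: "cmod S = L" using sum by (simp add: S_def L_def)
  have le: "Re (cnj S * f i) \<le> L" if "i \<in> I" for i
  proof -
    have "Re (cnj S * f i) \<le> cmod (cnj S * f i)" by (rule complex_Re_le_cmod)
    also have "\<dots> = L" using unit that norm_S by (simp add: norm_mult)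
    finally show ?thesis .
  qed
  have "(\<Sum>i\<in>I. Re (cnj S * f i)) = Re (cnj S * S)"
    by (simp add: S_def sum_distrib_left Re_sum)
  also have "\<dots> = (cmod S)\<^sup>2"
    by (simp add: mult.commute[of "cnj S"] complex_norm_square[symmetric])
  also have "\<dots> = L * L"
    using norm_S by (simp add: power2_eq_square)
  finally have "(\<Sum>i\<in>I. L - Re (cnj S * f i)) = 0"
    by (simp add: sum_subtractf L_def)
  then have Re_eq: "Re (cnj S * f i) = L" if "i \<in> I" for i
    using le I that by (subst (asm) sum_nonneg_eq_0_iff) auto
  have "f i = of_real L / cnj S" if i: "i \<in> I" for i
  proof -
    define z where "z = cnj S * f i"
    have "Re z = L" "cmod z = L"
      using Re_eq[OF i] unit i norm_S by (simp_all add: z_def norm_mult)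
    then have "Im z = 0" by (metis Im_eq_0 abs_norm_cancel)
    then have "z = of_real L" using \<open>Re z = L\<close> by (simp add: complex_eq_iff)
    moreover have "cnj S \<noteq> 0" using i I norm_S by (auto simp: L_def card_gt_0_iff)
    ultimately show ?thesis by (simp add: z_def field_simps)
  qed
  then show ?thesis by blast
qed

lemma finite_order_mat_diagonalizable:
  fixes A :: "complex mat"
  assumes A: "A \<in> carrier_mat n n" and m: "0 < m" and pow: "A ^\<^sub>m m = 1\<^sub>m n"
  obtains P Q d where "similar_mat_wit A (mat n n (\<lambda>(i, j). if i = j then d i else 0)) P Q"
    and "\<forall>i<n. d i ^ m = 1"
proof -
  obtain n_as where "jordan_nf A n_as"
    using char_poly_factorized[OF A] jordan_nf_exists[OF A] by blast
  then obtain P Q where wit: "similar_mat_wit A (jordan_matrix n_as) P Q" and nz: "0 \<notin> fst ` set n_as"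
    unfolding jordan_nf_def similar_mat_def by blast
  have P: "P \<in> carrier_mat n n" and Q: "Q \<in> carrier_mat n n" and QP: "Q * P = 1\<^sub>m n"
    and J: "jordan_matrix n_as \<in> carrier_mat n n"
    using wit A unfolding similar_mat_wit_def Let_def by auto
  have "jordan_matrix n_as ^\<^sub>m m = Q * A ^\<^sub>m m * P"
    using similar_mat_wit_pow_id[OF similar_mat_wit_sym[OF wit]] .
  also have "\<dots> = 1\<^sub>m n"
    using Q QP by (simp add: pow)
  moreover have "sum_list (map fst n_as) = n"
    using J by (metis carrier_matD(1) jordan_matrix_dim(1))
  ultimately have blocks: "\<forall>(k, a) \<in> set n_as. k = 1 \<and> a ^ m = 1"
    using jordan_matrix_pow_eq_oneD[OF nz m] by simp
  then have "\<forall>(k, a) \<in> set n_as. k = 1" by auto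
  note diagonal = jordan_matrix_diagonal[OF this]
  have len: "length n_as = n"
    using J unfolding diagonal by auto
  note diag = diagonal[unfolded len]
  have roots: "\<forall>i<n. snd (n_as ! i) ^ m = 1"
  proof (intro allI impI)
    fix i assume "i < n"
    then have "n_as ! i \<in> set n_as" using len by simp
    then show "snd (n_as ! i) ^ m = 1" using blocks by auto
  qed
  show ?thesis
    by (rule that[where P = P and Q = Q and d = "\<lambda>i. snd (n_as ! i)"]) (use wit diag roots in auto)
qed

lemma scalar_if_finite_order_trace_norm:
  fixes A :: "complex mat"
  assumes A: "A \<in> carrier_mat n n" and m: "0 < m" and pow: "A ^\<^sub>m m = 1\<^sub>m n"
    and tr: "cmod (mat_trace A) = n"
  shows "\<exists>c. A = c \<cdot>\<^sub>m 1\<^sub>m n"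
proof -
  obtain P Q d where wit: "similar_mat_wit A (mat n n (\<lambda>(i, j). if i = j then d i else 0)) P Q"
    and roots: "\<forall>i<n. d i ^ m = 1"
    using finite_order_mat_diagonalizable[OF A m pow] .
  define D where "D = mat n n (\<lambda>(i, j). if i = j then d i else 0)"
  have P: "P \<in> carrier_mat n n" and Q: "Q \<in> carrier_mat n n" and PQ: "P * Q = 1\<^sub>m n"
    and QP: "Q * P = 1\<^sub>m n" and A_eq: "A = P * D * Q"
    using wit A unfolding similar_mat_wit_def Let_def D_def by auto
  have D: "D \<in> carrier_mat n n" by (simp add: D_def)
  have "mat_trace A = mat_trace (Q * (P * D))"
    unfolding A_eq by (rule mat_trace_mult_comm) (use P Q D in auto)
  also have "Q * (P * D) = D"
    using P Q D QP by (simp flip: assoc_mult_mat)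
  also have "mat_trace D = (\<Sum>i<n. d i)"
    by (simp add: mat_trace_def D_def)
  finally have "cmod (\<Sum>i<n. d i) = card {..<n}" using tr by simp
  moreover have "\<forall>i\<in>{..<n}. cmod (d i) = 1"
    using roots m power_eq_1_iff by blast
  ultimately obtain c where "\<forall>i<n. d i = c"
    using const_if_norm_sum_eq_card[of "{..<n}" d] by auto
  then have "D = c \<cdot>\<^sub>m 1\<^sub>m n" by (intro eq_matI) (auto simp: D_def)
  then have "A = (c \<cdot>\<^sub>m P) * Q"
    using A_eq mult_smult_distrib[OF P one_carrier_mat] P by simp
  also have "\<dots> = c \<cdot>\<^sub>m (P * Q)"
    using mult_smult_assoc_mat[OF P Q] .
  finally show ?thesis unfolding PQ by blast
qed

lemma trace_norm_if_finite_order_scalar: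
  fixes c :: complex
  assumes "0 < n" "0 < m" "(c \<cdot>\<^sub>m 1\<^sub>m n) ^\<^sub>m m = 1\<^sub>m n"
  shows "cmod (mat_trace (c \<cdot>\<^sub>m 1\<^sub>m n)) = n"
proof -
  have "(c ^ m \<cdot>\<^sub>m 1\<^sub>m n) $$ (0, 0) = 1\<^sub>m n $$ (0, 0)"
    using assms(3) by (simp add: smult_one_mat_pow)
  then have "c ^ m = 1" using assms(1) by simp
  then have "cmod c = 1" using assms(2) power_eq_1_iff by blast
  then show ?thesis by (simp add: norm_mult)
qed

lemma eq_one_if_finite_order_trace:
  fixes A :: "complex mat"
  assumes A: "A \<in> carrier_mat n n" and "0 < n" "0 < m" "A ^\<^sub>m m = 1\<^sub>m n"
    and tr: "mat_trace A = n"
  shows "A = 1\<^sub>m n"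
proof -
  obtain c where c: "A = c \<cdot>\<^sub>m 1\<^sub>m n"
    using scalar_if_finite_order_trace_norm[OF assms(1,3,4)] tr by auto
  then have "c = 1" using tr \<open>0 < n\<close> by simp
  then show ?thesis using c by (intro eq_matI) auto
qed

section \<open>Representations and Schur's lemma\<close>

definition character :: "('a, 'b) monoid_scheme \<Rightarrow> ('a \<Rightarrow> complex mat) \<Rightarrow> 'a \<Rightarrow> complex" where
  "character G \<rho> = (\<lambda>g. if g \<in> carrier G then mat_trace (\<rho> g) else 0)"

lemma mem_Irr_iff: "\<chi> \<in> Irr G \<longleftrightarrow> (\<exists>n \<rho>. irreducible_rep G n \<rho> \<and> \<chi> = character G \<rho>)"
  by (simp add: Irr_def character_def)

lemma (in group) sum_mult_left_reindex:
  assumes "a \<in> carrier G"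
  shows "(\<Sum>g\<in>carrier G. f (a \<otimes> g)) = (\<Sum>g\<in>carrier G. f g)"
proof -
  have "inj_on (\<lambda>g. a \<otimes> g) (carrier G)" using assms by (auto simp: inj_on_def)
  then show ?thesis using sum.reindex[of "\<lambda>g. a \<otimes> g" "carrier G" f] surj_const_mult[OF assms] by simp
qed

locale group_rep = group G for G :: "('a, 'b) monoid_scheme" (structure) +
  fixes n :: nat and \<rho> :: "'a \<Rightarrow> complex mat"
  assumes is_rep: "is_rep G n \<rho>"
begin

lemma degree_pos: "0 < n"
  using is_rep unfolding is_rep_def by auto

lemma rep_carrier [simp]: "g \<in> carrier G \<Longrightarrow> \<rho> g \<in> carrier_mat n n"
  using is_rep unfolding is_rep_def by auto

lemma rep_dim [simp]: "g \<in> carrier G \<Longrightarrow> dim_row (\<rho> g) = n" "g \<in> carrier G \<Longrightarrow> dim_col (\<rho> g) = n"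
  using rep_carrier unfolding carrier_mat_def by auto

lemma rep_one [simp]: "\<rho> \<one> = 1\<^sub>m n"
  using is_rep unfolding is_rep_def by auto

lemma rep_mult: "x \<in> carrier G \<Longrightarrow> y \<in> carrier G \<Longrightarrow> \<rho> (x \<otimes> y) = \<rho> x * \<rho> y"
  using is_rep unfolding is_rep_def by auto

lemma rep_inv_mult [simp]: "g \<in> carrier G \<Longrightarrow> \<rho> (inv g) * \<rho> g = 1\<^sub>m n"
  using rep_mult[of "inv g" g] by simp

lemma rep_mult_inv [simp]: "g \<in> carrier G \<Longrightarrow> \<rho> g * \<rho> (inv g) = 1\<^sub>m n"
  using rep_mult[of g "inv g"] by simp

lemma rep_pow:
  assumes "g \<in> carrier G"
  shows "\<rho> (g [^] (k :: nat)) = \<rho> g ^\<^sub>m k"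
proof (induction k)
  case 0
  show ?case using rep_carrier[OF assms] by simp
qed (simp add: assms rep_mult)

lemma rep_mult_entry:
  "x \<in> carrier G \<Longrightarrow> y \<in> carrier G \<Longrightarrow> i < n \<Longrightarrow> j < n \<Longrightarrow>
    (\<rho> x * \<rho> y) $$ (i, j) = (\<Sum>p<n. \<rho> x $$ (i, p) * \<rho> y $$ (p, j))"
  by (rule mult_mat_entry) simp_all

lemma rep_commutator_eq_one_iff:
  assumes x: "x \<in> carrier G" and g: "g \<in> carrier G"
  shows "\<rho> (inv x \<otimes> inv g \<otimes> x \<otimes> g) = 1\<^sub>m n \<longleftrightarrow> \<rho> x * \<rho> g = \<rho> g * \<rho> x"
proof -
  define M where "M = \<rho> (g \<otimes> x)"
  define N where "N = \<rho> (inv (g \<otimes> x))"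
  have MN: "M * N = 1\<^sub>m n" and NM: "N * M = 1\<^sub>m n"
    using x g by (simp_all add: M_def N_def)
  have M: "M = \<rho> g * \<rho> x"
    using x g by (simp add: M_def rep_mult)
  have NM_carrier: "N \<in> carrier_mat n n" "M \<in> carrier_mat n n" "\<rho> x * \<rho> g \<in> carrier_mat n n"
    using x g mult_carrier_mat[OF rep_carrier[OF x] rep_carrier[OF g]] by (simp_all add: M_def N_def)
  have "inv x \<otimes> inv g \<otimes> x \<otimes> g = inv (g \<otimes> x) \<otimes> (x \<otimes> g)"
    using x g by (simp add: inv_mult_group m_assoc)
  then have comm: "\<rho> (inv x \<otimes> inv g \<otimes> x \<otimes> g) = N * (\<rho> x * \<rho> g)"
    using x g by (simp add: N_def rep_mult)
  have cancel: "M * (N * (\<rho> x * \<rho> g)) = \<rho> x * \<rho> g"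
    using assoc_mult_mat[OF NM_carrier(2,1,3)] left_mult_one_mat[OF NM_carrier(3)] MN by simp
  show ?thesis
  proof
    assume "\<rho> (inv x \<otimes> inv g \<otimes> x \<otimes> g) = 1\<^sub>m n"
    then have "M * (N * (\<rho> x * \<rho> g)) = M"
      using comm right_mult_one_mat[OF NM_carrier(2)] by simp
    then show "\<rho> x * \<rho> g = \<rho> g * \<rho> x" using cancel M by simp
  next
    assume "\<rho> x * \<rho> g = \<rho> g * \<rho> x"
    then show "\<rho> (inv x \<otimes> inv g \<otimes> x \<otimes> g) = 1\<^sub>m n" using comm NM M by simp
  qed
qed

lemma subgroup_rep_kernel: "subgroup {g \<in> carrier G. \<rho> g = 1\<^sub>m n} G"
proof (rule subgroupI)
  fix g assume "g \<in> {g \<in> carrier G. \<rho> g = 1\<^sub>m n}"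
  then have g: "g \<in> carrier G" "\<rho> g = 1\<^sub>m n" by auto
  have "\<rho> (inv g) = \<rho> (inv g) * \<rho> g"
    using right_mult_one_mat[OF rep_carrier[OF inv_closed[OF g(1)]]] g(2) by simp
  also have "\<dots> = 1\<^sub>m n" using g(1) by simp
  finally show "inv g \<in> {g \<in> carrier G. \<rho> g = 1\<^sub>m n}" using g(1) by simp
qed (auto simp: rep_mult)

lemma eigenspace_invariant_subspace:
  assumes A: "A \<in> carrier_mat n n" and comm: "\<And>g. g \<in> carrier G \<Longrightarrow> A * \<rho> g = \<rho> g * A"
    and v: "eigenvector A v c" and proper: "{w \<in> carrier_vec n. A *\<^sub>v w = c \<cdot>\<^sub>v w} \<noteq> carrier_vec n"
  shows "nontriv_invariant_subspace G n \<rho> {w \<in> carrier_vec n. A *\<^sub>v w = c \<cdot>\<^sub>v w}"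
    (is "nontriv_invariant_subspace G n \<rho> ?W")
  unfolding nontriv_invariant_subspace_def
proof (intro conjI ballI allI proper)
  show "?W \<subseteq> carrier_vec n" by auto
  show "0\<^sub>v n \<in> ?W" using A by (auto intro!: eq_vecI)
  show "?W \<noteq> {0\<^sub>v n}" using v A unfolding eigenvector_def by auto
next
  fix x y assume "x \<in> ?W" "y \<in> ?W"
  then show "x + y \<in> ?W"
    using A smult_add_distrib_vec[of x n y c] by (simp add: mult_add_distrib_mat_vec)
next
  fix d x assume "x \<in> ?W"
  then show "d \<cdot>\<^sub>v x \<in> ?W" using A by (simp add: mult_mat_vec smult_smult_assoc mult.commute)
next
  fix g x assume g: "g \<in> carrier G" and x: "x \<in> ?W"
  have "A *\<^sub>v (\<rho> g *\<^sub>v x) = (A * \<rho> g) *\<^sub>v x"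
    using assoc_mult_mat_vec[OF A rep_carrier[OF g], of x] x by simp
  also have "\<dots> = \<rho> g *\<^sub>v (A *\<^sub>v x)"
    using assoc_mult_mat_vec[OF rep_carrier[OF g] A, of x] x by (simp add: comm[OF g])
  also have "\<dots> = c \<cdot>\<^sub>v (\<rho> g *\<^sub>v x)" using mult_mat_vec[OF rep_carrier[OF g], of x c] x by simp
  finally show "\<rho> g *\<^sub>v x \<in> ?W" using mult_mat_vec_carrier[OF rep_carrier[OF g], of x] x by simp
qed

end

locale group_irrep = group_rep +
  assumes no_invariant_subspace: "\<nexists>W. nontriv_invariant_subspace G n \<rho> W"
begin

lemma irreducible_rep: "irreducible_rep G n \<rho>"
  using is_rep no_invariant_subspace unfolding irreducible_rep_def by blast

lemma character_in_Irr: "character G \<rho> \<in> Irr G"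
  using irreducible_rep by (auto simp: mem_Irr_iff)

lemma schur_lemma:
  assumes A: "A \<in> carrier_mat n n" and comm: "\<And>g. g \<in> carrier G \<Longrightarrow> A * \<rho> g = \<rho> g * A"
  shows "\<exists>c. A = c \<cdot>\<^sub>m 1\<^sub>m n"
proof -
  obtain c where "c \<in> spectrum A" using spectrum_non_empty[OF A degree_pos] by auto
  then obtain v where "eigenvector A v c" unfolding spectrum_def eigenvalue_def by auto
  then have eigen: "A *\<^sub>v w = c \<cdot>\<^sub>v w" if "w \<in> carrier_vec n" for w
    using eigenspace_invariant_subspace[OF A comm] no_invariant_subspace that by blast
  have "A = c \<cdot>\<^sub>m 1\<^sub>m n"
  proof (rule eq_matI)
    fix i j assume "i < dim_row (c \<cdot>\<^sub>m 1\<^sub>m n)" "j < dim_col (c \<cdot>\<^sub>m 1\<^sub>m n)"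
    then have ij: "i < n" "j < n" by auto
    have "A $$ (i, j) = (A *\<^sub>v unit_vec n j) $ i" using A ij by simp
    also have "\<dots> = (c \<cdot>\<^sub>m 1\<^sub>m n) $$ (i, j)" using eigen[of "unit_vec n j"] ij by simp
    finally show "A $$ (i, j) = (c \<cdot>\<^sub>m 1\<^sub>m n) $$ (i, j)" .
  qed (use A in auto)
  then show ?thesis by blast
qed

end

section \<open>Representations of finite groups\<close>

locale finite_group_rep = group_rep +
  assumes finite_carrier: "finite (carrier G)"
begin

lemma rep_pow_order: "g \<in> carrier G \<Longrightarrow> \<rho> g ^\<^sub>m Coset.order G = 1\<^sub>m n"
  using rep_pow[of g "Coset.order G"] pow_order_eq_1 by simp

lemma order_pos: "0 < Coset.order G"
  using finite_carrier order_gt_0_iff_finite by blast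

lemma character_one [simp]: "character G \<rho> \<one> = of_nat n"
  by (simp add: character_def mat_trace_def)

lemma mem_Zchar_iff: "g \<in> Zchar G (character G \<rho>) \<longleftrightarrow> g \<in> carrier G \<and> (\<exists>c. \<rho> g = c \<cdot>\<^sub>m 1\<^sub>m n)"
proof (cases "g \<in> carrier G")
  case True
  have "cmod (mat_trace (\<rho> g)) = n \<longleftrightarrow> (\<exists>c. \<rho> g = c \<cdot>\<^sub>m 1\<^sub>m n)"
    using scalar_if_finite_order_trace_norm[OF rep_carrier[OF True] order_pos rep_pow_order[OF True]]
      trace_norm_if_finite_order_scalar[OF degree_pos order_pos] rep_pow_order[OF True] by auto
  then show ?thesis using True by (simp add: Zchar_def character_def)
qed (simp add: Zchar_def)

lemma mem_kerchar_iff: "g \<in> kerchar G (character G \<rho>) \<longleftrightarrow> g \<in> carrier G \<and> \<rho> g = 1\<^sub>m n"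
proof (cases "g \<in> carrier G")
  case True
  have "mat_trace (\<rho> g) = n \<longleftrightarrow> \<rho> g = 1\<^sub>m n"
    using eq_one_if_finite_order_trace[OF rep_carrier[OF True] degree_pos order_pos rep_pow_order[OF True]]
    by auto
  then show ?thesis using True by (simp add: kerchar_def character_def)
qed (simp add: kerchar_def)

lemma subgroup_kerchar: "subgroup (kerchar G (character G \<rho>)) G"
proof -
  have "kerchar G (character G \<rho>) = {g \<in> carrier G. \<rho> g = 1\<^sub>m n}"
    using mem_kerchar_iff by blast
  then show ?thesis using subgroup_rep_kernel by simp
qed

text \<open>Entry \<open>(i, l)\<close> of \<open>\<Sum>g. \<rho>(g) E\<^sub>j\<^sub>k \<rho>(g\<inverse>)\<close>, where \<open>E\<^sub>j\<^sub>k\<close> is the matrix unit; Schur's lemma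
  makes it scalar, which yields the orthogonality relations for the matrix coefficients.\<close>
definition averaged_coefficients :: "nat \<Rightarrow> nat \<Rightarrow> complex mat" where
  "averaged_coefficients j k = mat n n (\<lambda>(i, l). \<Sum>g\<in>carrier G. \<rho> g $$ (i, j) * \<rho> (inv g) $$ (k, l))"

lemma averaged_coefficients_carrier [simp]: "averaged_coefficients j k \<in> carrier_mat n n"
  by (simp add: averaged_coefficients_def)

lemma averaged_coefficients_index:
  "i < n \<Longrightarrow> l < n \<Longrightarrow>
    averaged_coefficients j k $$ (i, l) = (\<Sum>g\<in>carrier G. \<rho> g $$ (i, j) * \<rho> (inv g) $$ (k, l))"
  by (simp add: averaged_coefficients_def)

lemma averaged_coefficients_commute:
  assumes h: "h \<in> carrier G" and jk: "j < n" "k < n"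
  shows "averaged_coefficients j k * \<rho> h = \<rho> h * averaged_coefficients j k"
proof (rule eq_matI)
  let ?T = "averaged_coefficients j k"
  fix i l assume "i < dim_row (\<rho> h * ?T)" "l < dim_col (\<rho> h * ?T)"
  then have il: "i < n" "l < n" using h by (simp_all add: averaged_coefficients_def)
  have "(?T * \<rho> h) $$ (i, l) = (\<Sum>q<n. ?T $$ (i, q) * \<rho> h $$ (q, l))"
    using mult_mat_entry[OF averaged_coefficients_carrier rep_carrier[OF h] il] .
  also have "\<dots> = (\<Sum>q<n. (\<Sum>g\<in>carrier G. \<rho> g $$ (i, j) * \<rho> (inv g) $$ (k, q)) * \<rho> h $$ (q, l))"
    using il by (intro sum.cong refl) (simp add: averaged_coefficients_index)
  also have "\<dots> = (\<Sum>g\<in>carrier G. \<rho> g $$ (i, j) * (\<Sum>q<n. \<rho> (inv g) $$ (k, q) * \<rho> h $$ (q, l)))"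
    by (simp add: sum_distrib_left sum_distrib_right mult.assoc) (rule sum.swap)
  also have "\<dots> = (\<Sum>g\<in>carrier G. \<rho> g $$ (i, j) * \<rho> (inv g \<otimes> h) $$ (k, l))"
  proof (intro sum.cong refl)
    fix g assume g: "g \<in> carrier G"
    have "\<rho> (inv g \<otimes> h) $$ (k, l) = (\<Sum>q<n. \<rho> (inv g) $$ (k, q) * \<rho> h $$ (q, l))"
      unfolding rep_mult[OF inv_closed[OF g] h] using g h jk il by (intro rep_mult_entry) auto
    then show "\<rho> g $$ (i, j) * (\<Sum>q<n. \<rho> (inv g) $$ (k, q) * \<rho> h $$ (q, l))
        = \<rho> g $$ (i, j) * \<rho> (inv g \<otimes> h) $$ (k, l)" by simp
  qed
  also have "\<dots> = (\<Sum>g\<in>carrier G. \<rho> (h \<otimes> g) $$ (i, j) * \<rho> (inv (h \<otimes> g) \<otimes> h) $$ (k, l))"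
    by (rule sum_mult_left_reindex[OF h, of "\<lambda>g. \<rho> g $$ (i, j) * \<rho> (inv g \<otimes> h) $$ (k, l)", symmetric])
  also have "\<dots> = (\<Sum>g\<in>carrier G. (\<Sum>p<n. \<rho> h $$ (i, p) * \<rho> g $$ (p, j)) * \<rho> (inv g) $$ (k, l))"
  proof (intro sum.cong refl)
    fix g assume g: "g \<in> carrier G"
    have "inv (h \<otimes> g) \<otimes> h = inv g"
      using g h by (simp add: inv_mult_group m_assoc)
    moreover have "\<rho> (h \<otimes> g) $$ (i, j) = (\<Sum>p<n. \<rho> h $$ (i, p) * \<rho> g $$ (p, j))"
      unfolding rep_mult[OF h g] using g h jk il by (intro rep_mult_entry) auto
    ultimately show "\<rho> (h \<otimes> g) $$ (i, j) * \<rho> (inv (h \<otimes> g) \<otimes> h) $$ (k, l)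
        = (\<Sum>p<n. \<rho> h $$ (i, p) * \<rho> g $$ (p, j)) * \<rho> (inv g) $$ (k, l)" by simp
  qed
  also have "\<dots> = (\<Sum>p<n. \<rho> h $$ (i, p) * (\<Sum>g\<in>carrier G. \<rho> g $$ (p, j) * \<rho> (inv g) $$ (k, l)))"
    by (simp add: sum_distrib_left sum_distrib_right mult.assoc) (rule sum.swap)
  also have "\<dots> = (\<Sum>p<n. \<rho> h $$ (i, p) * ?T $$ (p, l))"
    using il by (intro sum.cong refl) (simp add: averaged_coefficients_index)
  also have "\<dots> = (\<rho> h * ?T) $$ (i, l)"
    using mult_mat_entry[OF rep_carrier[OF h] averaged_coefficients_carrier il] by (rule sym)
  finally show "(?T * \<rho> h) $$ (i, l) = (\<rho> h * ?T) $$ (i, l)" .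
qed (use h in \<open>simp_all only: index_mult_mat dim_row_mat dim_col_mat averaged_coefficients_def rep_dim\<close>)

lemma mat_trace_averaged_coefficients:
  assumes jk: "j < n" "k < n"
  shows "mat_trace (averaged_coefficients j k) = (if k = j then of_nat (card (carrier G)) else 0)"
proof -
  have "mat_trace (averaged_coefficients j k) = (\<Sum>g\<in>carrier G. \<Sum>i<n. \<rho> (inv g) $$ (k, i) * \<rho> g $$ (i, j))"
    by (simp add: mat_trace_def averaged_coefficients_def sum.swap[of _ "{..<n}"] mult.commute)
  also have "\<dots> = (\<Sum>g\<in>carrier G. 1\<^sub>m n $$ (k, j))"
  proof (intro sum.cong refl)
    fix g assume "g \<in> carrier G"
    then show "(\<Sum>i<n. \<rho> (inv g) $$ (k, i) * \<rho> g $$ (i, j)) = 1\<^sub>m n $$ (k, j)"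
      using rep_mult_entry[of "inv g" g k j] jk by simp
  qed
  finally show ?thesis using jk by simp
qed

end

locale finite_group_irrep = group_irrep + finite_group_rep
begin

lemma commutators_in_kerchar_iff_mem_Zchar:
  assumes x: "x \<in> carrier G"
  shows "(\<forall>g\<in>carrier G. inv x \<otimes> inv g \<otimes> x \<otimes> g \<in> kerchar G (character G \<rho>))
    \<longleftrightarrow> x \<in> Zchar G (character G \<rho>)"
proof -
  have "(\<forall>g\<in>carrier G. inv x \<otimes> inv g \<otimes> x \<otimes> g \<in> kerchar G (character G \<rho>))
      \<longleftrightarrow> (\<forall>g\<in>carrier G. \<rho> x * \<rho> g = \<rho> g * \<rho> x)"
    using x by (simp add: mem_kerchar_iff rep_commutator_eq_one_iff)
  also have "\<dots> \<longleftrightarrow> (\<exists>c. \<rho> x = c \<cdot>\<^sub>m 1\<^sub>m n)"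
  proof
    assume "\<forall>g\<in>carrier G. \<rho> x * \<rho> g = \<rho> g * \<rho> x"
    then show "\<exists>c. \<rho> x = c \<cdot>\<^sub>m 1\<^sub>m n" using schur_lemma[OF rep_carrier[OF x]] by blast
  next
    assume "\<exists>c. \<rho> x = c \<cdot>\<^sub>m 1\<^sub>m n"
    then show "\<forall>g\<in>carrier G. \<rho> x * \<rho> g = \<rho> g * \<rho> x"
      using smult_one_mat_comm[OF rep_carrier] by auto
  qed
  also have "\<dots> \<longleftrightarrow> x \<in> Zchar G (character G \<rho>)"
    using x by (simp add: mem_Zchar_iff)
  finally show ?thesis .
qed

lemma commutator_sub_subset_kerchar_iff:
  assumes X: "X \<subseteq> carrier G"
  shows "commutator_sub G X \<subseteq> kerchar G (character G \<rho>) \<longleftrightarrow> X \<subseteq> Zchar G (character G \<rho>)"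
proof -
  define S where "S = {inv x \<otimes> inv g \<otimes> x \<otimes> g | x g. x \<in> X \<and> g \<in> carrier G}"
  have "commutator_sub G X \<subseteq> kerchar G (character G \<rho>) \<longleftrightarrow> S \<subseteq> kerchar G (character G \<rho>)"
    unfolding commutator_sub_def S_def[symmetric]
  proof
    assume "generate G S \<subseteq> kerchar G (character G \<rho>)"
    then show "S \<subseteq> kerchar G (character G \<rho>)" using generate.incl[of _ S G] by blast
  qed (rule generate_subgroup_incl[OF _ subgroup_kerchar])
  also have "\<dots> \<longleftrightarrow> (\<forall>x\<in>X. \<forall>g\<in>carrier G. inv x \<otimes> inv g \<otimes> x \<otimes> g \<in> kerchar G (character G \<rho>))"
    unfolding S_def by blast
  also have "\<dots> \<longleftrightarrow> X \<subseteq> Zchar G (character G \<rho>)"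
    using X commutators_in_kerchar_iff_mem_Zchar by blast
  finally show ?thesis .
qed

lemma averaged_coefficients_eq:
  assumes jk: "j < n" "k < n"
  shows "averaged_coefficients j k = (if k = j then of_nat (card (carrier G)) / of_nat n else 0) \<cdot>\<^sub>m 1\<^sub>m n"
proof -
  obtain c where c: "averaged_coefficients j k = c \<cdot>\<^sub>m 1\<^sub>m n"
    using schur_lemma[OF averaged_coefficients_carrier averaged_coefficients_commute[OF _ jk]] by blast
  then have "of_nat n * c = (if k = j then of_nat (card (carrier G)) else 0)"
    using mat_trace_averaged_coefficients[OF jk] by simp
  then show ?thesis using c degree_pos by (auto simp: field_simps)
qed

lemma character_orthogonality:
  "(\<Sum>g\<in>carrier G. character G \<rho> g * character G \<rho> (inv g)) = of_nat (card (carrier G))"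
proof -
  have "(\<Sum>g\<in>carrier G. character G \<rho> g * character G \<rho> (inv g))
      = (\<Sum>i<n. \<Sum>k<n. averaged_coefficients i k $$ (i, k))"
  proof -
    have "(\<Sum>g\<in>carrier G. character G \<rho> g * character G \<rho> (inv g))
        = (\<Sum>g\<in>carrier G. \<Sum>i<n. \<Sum>k<n. \<rho> g $$ (i, i) * \<rho> (inv g) $$ (k, k))"
      by (intro sum.cong refl) (simp add: character_def mat_trace_def sum_product)
    also have "\<dots> = (\<Sum>i<n. \<Sum>k<n. \<Sum>g\<in>carrier G. \<rho> g $$ (i, i) * \<rho> (inv g) $$ (k, k))"
      by (simp add: sum.swap[of _ "carrier G"])
    finally show ?thesis by (simp add: averaged_coefficients_index)
  qed
  also have "\<dots> = (\<Sum>i<n. \<Sum>k<n. if k = i then of_nat (card (carrier G)) / of_nat n else 0)"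
    by (intro sum.cong refl) (simp add: averaged_coefficients_eq)
  also have "\<dots> = (\<Sum>i<n. of_nat (card (carrier G)) / of_nat n)"
    by simp
  also have "\<dots> = of_nat (card (carrier G))"
    using degree_pos by simp
  finally show ?thesis .
qed

lemma character_mult_inv_Zchar:
  assumes g: "g \<in> Zchar G (character G \<rho>)"
  shows "character G \<rho> g * character G \<rho> (inv g) = of_nat n ^ 2"
proof -
  obtain c where gc: "g \<in> carrier G" and c: "\<rho> g = c \<cdot>\<^sub>m 1\<^sub>m n"
    using g by (auto simp: mem_Zchar_iff)
  have "1\<^sub>m n = \<rho> (inv g) * \<rho> g" using gc by simp
  also have "\<dots> = c \<cdot>\<^sub>m \<rho> (inv g)"
    unfolding c using mult_smult_distrib[OF rep_carrier[OF inv_closed[OF gc]] one_carrier_mat] gc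
    by (simp del: rep_inv_mult)
  finally have "mat_trace (1\<^sub>m n) = mat_trace (c \<cdot>\<^sub>m \<rho> (inv g))" by (rule arg_cong)
  then have "c * mat_trace (\<rho> (inv g)) = of_nat n"
    using mat_trace_smult[OF rep_carrier[OF inv_closed[OF gc]]] by simp
  then show ?thesis using gc c by (simp add: character_def power2_eq_square mult.assoc)
qed

lemma card_carrier_eq_GVZ:
  assumes "GVZ G"
  shows "card (carrier G) = n\<^sup>2 * card (Zchar G (character G \<rho>))"
proof -
  let ?Z = "Zchar G (character G \<rho>)"
  have Z: "?Z \<subseteq> carrier G" by (auto simp: Zchar_def)
  have "of_nat (card (carrier G)) = (\<Sum>g\<in>carrier G. character G \<rho> g * character G \<rho> (inv g))"
    by (rule character_orthogonality[symmetric])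
  also have "\<dots> = (\<Sum>g\<in>?Z. character G \<rho> g * character G \<rho> (inv g))"
    using assms character_in_Irr by (intro sum.mono_neutral_right[OF finite_carrier Z]) (auto simp: GVZ_def)
  also have "\<dots> = of_nat (n\<^sup>2 * card ?Z)"
    by (simp add: character_mult_inv_Zchar)
  finally show ?thesis by (simp only: of_nat_eq_iff)
qed

end

lemma finite_group_irrepI:
  assumes "group G" "finite (carrier G)" "irreducible_rep G n \<rho>"
  shows "finite_group_irrep G n \<rho>"
  using assms unfolding irreducible_rep_def
  by (intro finite_group_irrep.intro group_irrep.intro finite_group_rep.intro finite_group_rep_axioms.intro
      group_irrep_axioms.intro group_rep.intro group_rep_axioms.intro) auto

section \<open>Character degrees\<close>

lemma no_invariant_subspace_dim_one: "\<not> nontriv_invariant_subspace G 1 \<rho> W"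
proof
  assume "nontriv_invariant_subspace G 1 \<rho> W"
  then have W: "W \<subseteq> carrier_vec 1" "0\<^sub>v 1 \<in> W" "W \<noteq> {0\<^sub>v 1}" "W \<noteq> carrier_vec 1"
    and smult: "\<And>c w. w \<in> W \<Longrightarrow> c \<cdot>\<^sub>v w \<in> W"
    unfolding nontriv_invariant_subspace_def by auto
  obtain w where w: "w \<in> W" "w \<noteq> 0\<^sub>v 1" using W(2,3) by blast
  have wc: "w \<in> carrier_vec 1" using w W(1) by auto
  then have "w $ 0 \<noteq> 0" using w(2) by (auto intro: eq_vecI)
  then have "v = (v $ 0 / w $ 0) \<cdot>\<^sub>v w" if "v \<in> carrier_vec 1" for v
    using that wc by (intro eq_vecI) auto
  then have "carrier_vec 1 \<subseteq> W" using smult[OF w(1)] by (metis subsetI)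
  then show False using W(1,4) by blast
qed

lemma one_in_cd:
  assumes "group G"
  shows "1 \<in> cd G"
proof -
  have "\<not> nontriv_invariant_subspace G 1 (\<lambda>_. 1\<^sub>m 1) W" for W
    by (rule no_invariant_subspace_dim_one)
  then have "irreducible_rep G 1 (\<lambda>_. 1\<^sub>m 1)"
    unfolding irreducible_rep_def is_rep_def by auto
  then have "character G (\<lambda>_. 1\<^sub>m 1) \<in> Irr G" by (auto simp: mem_Irr_iff)
  moreover have "character G (\<lambda>_. 1\<^sub>m 1) \<one>\<^bsub>G\<^esub> = 1"
    using assms by (simp add: character_def mat_trace_def group.is_monoid monoid.one_closed)
  ultimately show ?thesis unfolding cd_def by force
qed

lemma nl_degree_eq:
  assumes "group G" "card (cd G) = 2" "\<chi> \<in> nl G" "\<psi> \<in> nl G"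
  shows "\<chi> \<one>\<^bsub>G\<^esub> = \<psi> \<one>\<^bsub>G\<^esub>"
proof (rule ccontr)
  assume ne: "\<chi> \<one>\<^bsub>G\<^esub> \<noteq> \<psi> \<one>\<^bsub>G\<^esub>"
  have sub: "{1, \<chi> \<one>\<^bsub>G\<^esub>, \<psi> \<one>\<^bsub>G\<^esub>} \<subseteq> cd G"
    using one_in_cd[OF assms(1)] assms(3,4) by (auto simp: cd_def nl_def)
  have "finite (cd G)" using assms(2) by (intro card_ge_0_finite) simp
  then have "card {1, \<chi> \<one>\<^bsub>G\<^esub>, \<psi> \<one>\<^bsub>G\<^esub>} \<le> 2"
    using card_mono[OF _ sub] assms(2) by simp
  then show False using ne assms(3,4) by (simp add: nl_def)
qed

theorem mainTheorem8:
  fixes G :: "('a, 'b) monoid_scheme" and \<chi> :: "'a \<Rightarrow> complex" and X :: "'a set"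
  assumes "group G" and "finite (carrier G)" and "GVZ G"
    and "card (cd G) = 2"
    and "\<chi> \<in> nl G"
    and "X \<in> {Zchar G \<psi> | \<psi>. \<psi> \<in> nl G}"
  shows "Zchar G \<chi> = X \<longleftrightarrow> commutator_sub G X \<subseteq> kerchar G \<chi>"
proof -
  obtain \<psi> where \<psi>: "\<psi> \<in> nl G" and X: "X = Zchar G \<psi>" using assms(6) by blast
  obtain n \<rho> where irr: "irreducible_rep G n \<rho>" and \<chi>: "\<chi> = character G \<rho>"
    using assms(5) by (auto simp: nl_def mem_Irr_iff)
  obtain n' \<rho>' where irr': "irreducible_rep G n' \<rho>'" and \<psi>': "\<psi> = character G \<rho>'"
    using \<psi> by (auto simp: nl_def mem_Irr_iff)
  interpret rep: finite_group_irrep G n \<rho> using finite_group_irrepI[OF assms(1,2) irr] .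
  interpret rep': finite_group_irrep G n' \<rho>' using finite_group_irrepI[OF assms(1,2) irr'] .
  have "n = n'"
    using nl_degree_eq[OF assms(1,4,5) \<psi>] \<chi> \<psi>' by simp
  then have "card (Zchar G \<chi>) = card X"
    using rep.card_carrier_eq_GVZ[OF assms(3)] rep'.card_carrier_eq_GVZ[OF assms(3)] rep.degree_pos
    by (simp add: \<chi> \<psi>' X)
  moreover have "finite (Zchar G \<chi>)"
    using assms(2) by (rule rev_finite_subset) (auto simp: Zchar_def)
  ultimately have "Zchar G \<chi> = X \<longleftrightarrow> X \<subseteq> Zchar G \<chi>"
    by (metis card_subset_eq order_refl)
  also have "\<dots> \<longleftrightarrow> commutator_sub G X \<subseteq> kerchar G \<chi>"
    using rep.commutator_sub_subset_kerchar_iff[of X] X by (auto simp: \<chi> Zchar_def)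
  finally show ?thesis .
qed

end
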